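(* Let $k>0$ and $j\ge 0$ be integers and let $p\in\mathbb{C}[z,z^{-1},u]$. Let $\min_u$ denote the minimal degree in $u$ of a monomial occurring in $p$ (with $\min_u:=0$ if $p=0$). Let $E$ be the rank-$2$ holomorphic vector bundle on $Z_k$ with transition matrix $T=\begin{pmatrix} z^j & p(z,u)\\ 0 & z^{-j}\end{pmatrix}$ from $U$ to $V$. Let $(a,b)$ be a section of $E$ over $U$, with $a=\sum_{r,s\ge0}a_{rs}z^su^r$ and $b=\sum_{r,s\ge0}b_{rs}z^su^r$ holomorphic on $U$, such that both $z^ja+pb$ and $z^{-j}b$ are holomorphic functions of $(z^{-1},z^ku)$. Then for every $r<\min_u$ we have $a_{rs}=0$ for all $s>kr-j$; that is, the terms of $a$ of degree $r$ in $u$, if any, are among $a_{r0}u^r+\dots+a_{r,kr-j}u^rz^{kr-j}$.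
   Context: $Z_k$ denotes the total space of the line bundle $\mathcal{O}_{\mathbb{P}^1}(-k)$, covered by two charts $U\cong\mathbb{C}^2$ with coordinates $(z,u)$ and $V\cong\mathbb{C}^2$ with coordinates $(w,v)$, glued on $U\cap V=\{z\neq0\}$ by $w=z^{-1}$, $v=z^ku$. A holomorphic function on $U\cap V$ with Laurent expansion $\sum c_{rs}z^su^r$ is holomorphic in $(z^{-1},z^ku)$, i.e. extends holomorphically to $V$, exactly when $c_{rs}=0$ whenever $s>kr$. Sections over $U$ of the bundle with transition matrix $T$ are pairs $(a,b)$ of holomorphic functions on $U$; such a section extends over $V$ iff $\binom{z^ja+pb}{z^{-j}b}$ extends holomorphically to $V$. *)

theory Defs
  imports "HOL-Analysis.Analysis"
begin

text \<open>Holomorphic functions on U = C^2 are represented by their power series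
  coefficients: a r s is the coefficient of z^s u^r. Such a coefficient family
  defines a holomorphic function on all of C^2 iff the double series converges
  absolutely at every point.\<close>
definition entire_coeffs :: "(nat \<Rightarrow> nat \<Rightarrow> complex) \<Rightarrow> bool" where
  "entire_coeffs a \<longleftrightarrow>
     (\<forall>z u::complex. ((\<lambda>(r,s). norm (a r s * z ^ s * u ^ r)) summable_on UNIV))"

text \<open>Elements of C[z,z^{-1},u]: p r s is the coefficient of z^s u^r (s an integer),
  finitely many nonzero.\<close>
definition laurent_poly :: "(nat \<Rightarrow> int \<Rightarrow> complex) \<Rightarrow> bool" where
  "laurent_poly p \<longleftrightarrow> finite {(r,s). p r s \<noteq> 0}"

definition min_u :: "(nat \<Rightarrow> int \<Rightarrow> complex) \<Rightarrow> nat" where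
  "min_u p = (if (\<forall>r s. p r s = 0) then 0 else (LEAST r. \<exists>s. p r s \<noteq> 0))"

text \<open>Laurent coefficient of z^s u^r in z^j a + p b.\<close>
definition first_comp_coeff ::
  "nat \<Rightarrow> (nat \<Rightarrow> int \<Rightarrow> complex) \<Rightarrow> (nat \<Rightarrow> nat \<Rightarrow> complex) \<Rightarrow> (nat \<Rightarrow> nat \<Rightarrow> complex)
     \<Rightarrow> nat \<Rightarrow> int \<Rightarrow> complex" where
  "first_comp_coeff j p a b r s =
     (if int j \<le> s then a r (nat (s - int j)) else 0) +
     (\<Sum>(r1,s1)\<in>{(r1,s1). p r1 s1 \<noteq> 0}.
        if r1 \<le> r \<and> s1 \<le> s then p r1 s1 * b (r - r1) (nat (s - s1)) else 0)"

text \<open>Laurent coefficient of z^s u^r in z^{-j} b.\<close>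
definition second_comp_coeff :: "nat \<Rightarrow> (nat \<Rightarrow> nat \<Rightarrow> complex) \<Rightarrow> nat \<Rightarrow> int \<Rightarrow> complex" where
  "second_comp_coeff j b r s = (if - int j \<le> s then b r (nat (s + int j)) else 0)"

text \<open>A holomorphic function on U \<inter> V with Laurent coefficients c r s extends
  holomorphically to V (i.e. is holomorphic in (z^{-1}, z^k u)) iff c r s = 0 whenever s > k r.\<close>
definition extends_to_V :: "nat \<Rightarrow> (nat \<Rightarrow> int \<Rightarrow> complex) \<Rightarrow> bool" where
  "extends_to_V k c \<longleftrightarrow> (\<forall>r s. int k * int r < s \<longrightarrow> c r s = 0)"

end

theory Submission
  imports Defs
begin

text \<open>Every monomial of \<open>p b\<close> has \<open>u\<close>-degree at least \<open>min_u p\<close>, so in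
  \<open>u\<close>-degrees \<open>r < min_u p\<close> the first component \<open>z^j a + p b\<close> of the section is just
  \<open>z^j a\<close>. Its extension to \<open>V\<close> therefore forces \<open>a\<^sub>r\<^sub>s = 0\<close> as soon as
  \<open>s + j > k r\<close>.\<close>

lemma min_u_le_of_coeff_nonzero:
  assumes "p r s \<noteq> 0"
  shows "min_u p \<le> r"
proof -
  have "min_u p = (LEAST r. \<exists>s. p r s \<noteq> 0)"
    using assms unfolding min_u_def by auto
  also have "\<dots> \<le> r"
    by (rule Least_le) (use assms in blast)
  finally show ?thesis .
qed

lemma first_comp_coeff_below_min_u:
  assumes "r < min_u p"
  shows "first_comp_coeff j p a b r t = (if int j \<le> t then a r (nat (t - int j)) else 0)"
proof -
  have "(\<Sum>(r1,s1)\<in>{(r1,s1). p r1 s1 \<noteq> 0}.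
          if r1 \<le> r \<and> s1 \<le> t then p r1 s1 * b (r - r1) (nat (t - s1)) else 0) = 0"
  proof (rule sum.neutral, clarify)
    fix r1 s1
    assume "p r1 s1 \<noteq> 0"
    then have "min_u p \<le> r1"
      by (rule min_u_le_of_coeff_nonzero)
    then show "(if r1 \<le> r \<and> s1 \<le> t then p r1 s1 * b (r - r1) (nat (t - s1)) else 0) = 0"
      using assms by auto
  qed
  then show ?thesis
    unfolding first_comp_coeff_def by simp
qed

theorem mainTheorem3:
  fixes k j :: nat
    and p :: "nat \<Rightarrow> int \<Rightarrow> complex"
    and a b :: "nat \<Rightarrow> nat \<Rightarrow> complex"
  assumes "k > 0"
    and "laurent_poly p"
    and "entire_coeffs a" and "entire_coeffs b"
    and "extends_to_V k (first_comp_coeff j p a b)"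
    and "extends_to_V k (second_comp_coeff j b)"
  shows "\<forall>r < min_u p. \<forall>s. int s > int k * int r - int j \<longrightarrow> a r s = 0"
proof (intro allI impI)
  fix r s
  assume r: "r < min_u p" and s: "int s > int k * int r - int j"
  have "first_comp_coeff j p a b r (int s + int j) = 0"
    using assms(5) s unfolding extends_to_V_def by auto
  then show "a r s = 0"
    using first_comp_coeff_below_min_u [OF r, of j a b "int s + int j"] by simp
qed

end
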